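(* For all integers $d\geq 1$, $C_d=W_d$.
   Context: Every Boolean function $f:\{0,1\}^n\to\{0,1\}$ has a unique multilinear representation $f=\sum_{S\subseteq[n]}a_S\prod_{i\in S}x_i$ over $\mathbb{R}$ agreeing with $f$ on $\{0,1\}^n$; $\deg(f)$ is the degree of this representation. A variable $x_i$ is relevant if it appears in a monomial with nonzero coefficient; $R(f)$ is the number of relevant variables. $R_d$ is the maximum of $R(f)$ over Boolean functions of degree at most $d$, and $C_d=R_d2^{-d}$. For a relevant variable $x_i$, $\deg_i(f)$ is the maximum of $|S|$ over sets $S\ni i$ with $a_S\neq 0$, and $w_i(f)=2^{-\deg_i(f)}$ (for irrelevant variables, $w_i(f)=0$). The weight of $f$ is $W(f)=\sum_i w_i(f)$, and $W_d$ is the maximum of $W(f)$ over all Boolean functions $f$ of degree at most $d$. *)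

theory Defs
  imports Complex_Main "HOL-Library.Extended_Real"
begin

text \<open>A Boolean function on n variables is f :: nat set \<Rightarrow> bool, where an input
  x \<in> {0,1}^n is encoded as the set of coordinates equal to 1 (a subset of {..<n}).
  Only the values on subsets of {..<n} matter.\<close>

definition mcoeff :: "nat \<Rightarrow> (nat set \<Rightarrow> bool) \<Rightarrow> nat set \<Rightarrow> real" where
  "mcoeff n f = (THE a. (\<forall>S. \<not> S \<subseteq> {..<n} \<longrightarrow> a S = 0) \<and>
      (\<forall>x. x \<subseteq> {..<n} \<longrightarrow>
         of_bool (f x) = (\<Sum>S\<in>Pow {..<n}. a S * (\<Prod>i\<in>S. of_bool (i \<in> x)))))"

definition bdeg :: "nat \<Rightarrow> (nat set \<Rightarrow> bool) \<Rightarrow> nat" where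
  "bdeg n f = Max (insert 0 {card S | S. S \<subseteq> {..<n} \<and> mcoeff n f S \<noteq> 0})"

definition relevant :: "nat \<Rightarrow> (nat set \<Rightarrow> bool) \<Rightarrow> nat \<Rightarrow> bool" where
  "relevant n f i = (\<exists>S. S \<subseteq> {..<n} \<and> i \<in> S \<and> mcoeff n f S \<noteq> 0)"

definition numrel :: "nat \<Rightarrow> (nat set \<Rightarrow> bool) \<Rightarrow> nat" where
  "numrel n f = card {i. i < n \<and> relevant n f i}"

definition deg_i :: "nat \<Rightarrow> (nat set \<Rightarrow> bool) \<Rightarrow> nat \<Rightarrow> nat" where
  "deg_i n f i = Max {card S | S. S \<subseteq> {..<n} \<and> i \<in> S \<and> mcoeff n f S \<noteq> 0}"

definition wt_i :: "nat \<Rightarrow> (nat set \<Rightarrow> bool) \<Rightarrow> nat \<Rightarrow> real" where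
  "wt_i n f i = (if relevant n f i then 2 powr (- real (deg_i n f i)) else 0)"

definition weight :: "nat \<Rightarrow> (nat set \<Rightarrow> bool) \<Rightarrow> real" where
  "weight n f = (\<Sum>i<n. wt_i n f i)"

definition R_d :: "nat \<Rightarrow> ereal" where
  "R_d d = (SUP p\<in>{(n, f). bdeg n f \<le> d}. ereal (real (numrel (fst p) (snd p))))"

definition C_d :: "nat \<Rightarrow> ereal" where
  "C_d d = R_d d * ereal (2 powr (- real d))"

definition W_d :: "nat \<Rightarrow> ereal" where
  "W_d d = (SUP p\<in>{(n, f). bdeg n f \<le> d}. ereal (weight (fst p) (snd p)))"

end

theory Submission
  imports Defs "HOL-Library.Nat_Bijection"
begin

text \<open>Every relevant variable has weight at least 2^-d, which gives C_d \<le> W_d. Conversely,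
  let f have degree at most d, and replace each relevant variable x_i by 2^(d - deg_i) fresh
  copies, together with d new address bits: in the new function g, variable i reads the copy
  addressed by the first d - deg_i address bits. A monomial of f over S satisfies
  deg_i \<ge> |S| for all i \<in> S, so it only looks at the first d - |S| address bits; expanding
  over their values turns it into a sum of monomials of degree at most d. Thus g has degree
  at most d, every copy is relevant for g, and g has at least 2^d W(f) relevant variables.\<close>

lemma prod_of_bool:
  "finite A \<Longrightarrow> (\<Prod>j\<in>A. (of_bool (P j)::'a::comm_semiring_1)) = of_bool (\<forall>j\<in>A. P j)"
  by (induction A rule: finite_induct) auto

lemma finite_cards_of_subsets: "finite {card S | S. S \<subseteq> {..<(n::nat)} \<and> P S}"
  by (rule finite_subset[of _ "card ` Pow {..<n}"]) auto

lemma sum_of_bool_eq_delta: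
  assumes "finite A"
  shows "(\<Sum>b\<in>A. of_bool (c = b) * g b) = (if c \<in> A then g c else (0::'a::semiring_1))"
proof -
  have "(\<Sum>b\<in>A. of_bool (c = b) * g b) = (\<Sum>b\<in>A. if c = b then g b else 0)"
    by (intro sum.cong) auto
  then show ?thesis using assms by (simp add: sum.delta)
qed

subsection \<open>Multilinear polynomials of bounded degree\<close>

text \<open>mpoly_deg_le n d h: h is a real multilinear polynomial of degree at most d in
  x_0, ..., x_(n-1); the monomial \<Prod>i\<in>S. x_i is of_bool (S \<subseteq> x) on the input encoded by x.\<close>

inductive mpoly_deg_le :: "nat \<Rightarrow> nat \<Rightarrow> (nat set \<Rightarrow> real) \<Rightarrow> bool" for n d where
  monomial: "S \<subseteq> {..<n} \<Longrightarrow> card S \<le> d \<Longrightarrow> mpoly_deg_le n d (\<lambda>x. c * of_bool (S \<subseteq> x))"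
| add: "mpoly_deg_le n d h1 \<Longrightarrow> mpoly_deg_le n d h2 \<Longrightarrow> mpoly_deg_le n d (\<lambda>x. h1 x + h2 x)"

lemma mpoly_deg_le_const: "mpoly_deg_le n d (\<lambda>x. c)"
  using mpoly_deg_le.monomial[of "{}" n d c] by simp

lemma mpoly_deg_le_cmult: "mpoly_deg_le n d h \<Longrightarrow> mpoly_deg_le n d (\<lambda>x. c * h x)"
proof (induction rule: mpoly_deg_le.induct)
  case (monomial S c')
  then show ?case using mpoly_deg_le.monomial[of S n d "c * c'"] by (simp add: mult.assoc)
next
  case (add h1 h2)
  then show ?case using mpoly_deg_le.add[OF add.IH] by (simp add: distrib_left)
qed

lemma mpoly_deg_le_mult_monomial:
  assumes "mpoly_deg_le n d2 h" "S \<subseteq> {..<n}" "card S \<le> d1"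
  shows "mpoly_deg_le n (d1 + d2) (\<lambda>x. (c * of_bool (S \<subseteq> x)) * h x)"
  using assms(1)
proof (induction rule: mpoly_deg_le.induct)
  case (monomial T c')
  have "card (S \<union> T) \<le> d1 + d2"
    using card_Un_le[of S T] monomial assms by linarith
  then have "mpoly_deg_le n (d1 + d2) (\<lambda>x. (c * c') * of_bool (S \<union> T \<subseteq> x))"
    using monomial assms by (intro mpoly_deg_le.monomial) auto
  then show ?case by (simp add: mult_ac of_bool_conj)
next
  case (add h1 h2)
  then show ?case using mpoly_deg_le.add[OF add.IH] by (simp add: distrib_left)
qed

lemma mpoly_deg_le_mult:
  assumes "mpoly_deg_le n d1 h1" "mpoly_deg_le n d2 h2"
  shows "mpoly_deg_le n (d1 + d2) (\<lambda>x. h1 x * h2 x)"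
  using assms(1)
proof (induction rule: mpoly_deg_le.induct)
  case (monomial S c)
  then show ?case using mpoly_deg_le_mult_monomial[OF assms(2)] by simp
next
  case (add h1 h2)
  then show ?case using mpoly_deg_le.add[OF add.IH] by (simp add: distrib_right)
qed

lemma mpoly_deg_le_sum:
  "finite I \<Longrightarrow> (\<And>i. i \<in> I \<Longrightarrow> mpoly_deg_le n d (h i)) \<Longrightarrow>
    mpoly_deg_le n d (\<lambda>x. \<Sum>i\<in>I. h i x)"
proof (induction I rule: finite_induct)
  case empty
  then show ?case by (simp add: mpoly_deg_le_const)
next
  case (insert a F)
  then show ?case using mpoly_deg_le.add[of n d "h a" "\<lambda>x. \<Sum>i\<in>F. h i x"] by simp
qed

lemma mpoly_deg_le_prod:
  "finite I \<Longrightarrow> (\<And>i. i \<in> I \<Longrightarrow> mpoly_deg_le n (e i) (h i)) \<Longrightarrow>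
    mpoly_deg_le n (\<Sum>i\<in>I. e i) (\<lambda>x. \<Prod>i\<in>I. h i x)"
proof (induction I rule: finite_induct)
  case empty
  then show ?case by (simp add: mpoly_deg_le_const)
next
  case (insert a F)
  then show ?case
    using mpoly_deg_le_mult[of n "e a" "h a" "\<Sum>i\<in>F. e i" "\<lambda>x. \<Prod>i\<in>F. h i x"] by simp
qed

lemma mpoly_deg_le_not_var: "j < n \<Longrightarrow> mpoly_deg_le n 1 (\<lambda>x. of_bool (j \<notin> x))"
proof -
  assume "j < n"
  then have "mpoly_deg_le n 1 (\<lambda>x. 1 * of_bool ({} \<subseteq> x) + (-1) * of_bool ({j} \<subseteq> x))"
    by (intro mpoly_deg_le.add mpoly_deg_le.monomial) auto
  moreover have "(\<lambda>x. 1 * of_bool ({} \<subseteq> x) + (-1) * of_bool ({j} \<subseteq> x)) =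
      (\<lambda>x. of_bool (j \<notin> x) :: real)"
    by auto
  ultimately show ?thesis by simp
qed

lemma mpoly_deg_le_prefix_indicator:
  assumes b: "b \<subseteq> {..<T}" and T: "T \<le> n"
  shows "mpoly_deg_le n T (\<lambda>x. of_bool (x \<inter> {..<T} = b))"
proof -
  have "mpoly_deg_le n (card b) (\<lambda>x. 1 * of_bool (b \<subseteq> x))"
    using b T by (intro mpoly_deg_le.monomial) auto
  moreover have "mpoly_deg_le n (\<Sum>j\<in>{..<T} - b. 1) (\<lambda>x. \<Prod>j\<in>{..<T} - b. of_bool (j \<notin> x))"
    using T by (intro mpoly_deg_le_prod mpoly_deg_le_not_var) auto
  ultimately have "mpoly_deg_le n (card b + (\<Sum>j\<in>{..<T} - b. 1))
      (\<lambda>x. of_bool (b \<subseteq> x) * (\<Prod>j\<in>{..<T} - b. of_bool (j \<notin> x)))"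
    using mpoly_deg_le_mult by fastforce
  moreover have "card b + (\<Sum>j\<in>{..<T} - b. (1::nat)) = T"
    using b card_mono[OF _ b] by (simp add: card_Diff_subset finite_subset)
  moreover have "of_bool (b \<subseteq> x) * (\<Prod>j\<in>{..<T} - b. of_bool (j \<notin> x)) =
      (of_bool (x \<inter> {..<T} = b) :: real)" for x
    using b by (subst prod_of_bool) auto
  ultimately show ?thesis by simp
qed

lemma mpoly_deg_le_coeffs:
  assumes "mpoly_deg_le n d h"
  shows "\<exists>a. (\<forall>S. \<not> S \<subseteq> {..<n} \<longrightarrow> a S = 0) \<and> (\<forall>S. d < card S \<longrightarrow> a S = 0) \<and>
     (\<forall>x. h x = (\<Sum>S\<in>Pow {..<n}. a S * of_bool (S \<subseteq> x)))"
  using assms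
proof (induction rule: mpoly_deg_le.induct)
  case (monomial S c)
  have "c * of_bool (S \<subseteq> x) = (\<Sum>T\<in>Pow {..<n}. (if T = S then c else 0) * of_bool (T \<subseteq> x))" for x
  proof -
    have "(\<Sum>T\<in>Pow {..<n}. (if T = S then c else 0) * of_bool (T \<subseteq> x)) =
        (\<Sum>T\<in>Pow {..<n}. if T = S then c * of_bool (S \<subseteq> x) else 0)"
      by (intro sum.cong) auto
    then show ?thesis using monomial by (simp add: sum.delta)
  qed
  then show ?case using monomial by (intro exI[of _ "\<lambda>T. if T = S then c else 0"]) auto
next
  case (add h1 h2)
  then obtain a1 a2 where
    a1: "(\<forall>S. \<not> S \<subseteq> {..<n} \<longrightarrow> a1 S = 0) \<and> (\<forall>S. d < card S \<longrightarrow> a1 S = 0) \<and>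
       (\<forall>x. h1 x = (\<Sum>S\<in>Pow {..<n}. a1 S * of_bool (S \<subseteq> x)))"
    and a2: "(\<forall>S. \<not> S \<subseteq> {..<n} \<longrightarrow> a2 S = 0) \<and> (\<forall>S. d < card S \<longrightarrow> a2 S = 0) \<and>
       (\<forall>x. h2 x = (\<Sum>S\<in>Pow {..<n}. a2 S * of_bool (S \<subseteq> x)))"
    by blast
  have "h1 x + h2 x = (\<Sum>S\<in>Pow {..<n}. (a1 S + a2 S) * of_bool (S \<subseteq> x))" for x
    using a1 a2 by (simp add: distrib_right sum.distrib)
  then show ?case using a1 a2 by (intro exI[of _ "\<lambda>S. a1 S + a2 S"]) simp
qed

subsection \<open>The multilinear coefficients\<close>

definition mexpansion :: "nat \<Rightarrow> (nat set \<Rightarrow> bool) \<Rightarrow> (nat set \<Rightarrow> real) \<Rightarrow> bool" where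
  "mexpansion n f a \<longleftrightarrow> (\<forall>S. \<not> S \<subseteq> {..<n} \<longrightarrow> a S = 0) \<and>
      (\<forall>x. x \<subseteq> {..<n} \<longrightarrow> of_bool (f x) = (\<Sum>S\<in>Pow {..<n}. a S * of_bool (S \<subseteq> x)))"

lemma mcoeff_eq_The_mexpansion: "mcoeff n f = (THE a. mexpansion n f a)"
proof -
  have "(\<Sum>S\<in>Pow {..<n}. a S * (\<Prod>i\<in>S. of_bool (i \<in> x))) =
     (\<Sum>S\<in>Pow {..<n}. a S * (of_bool (S \<subseteq> x)::real))" for a x
    by (intro sum.cong refl) (auto simp: prod_of_bool finite_subset)
  then show ?thesis unfolding mcoeff_def mexpansion_def by simp
qed

text \<open>Evaluating at x = S, whose proper subsets carry zero coefficients by induction on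
  card S, isolates the coefficient of S.\<close>

lemma expansion_zero_imp_coeffs_zero:
  fixes n :: nat
  assumes supp: "\<forall>S. \<not> S \<subseteq> {..<n} \<longrightarrow> a S = 0"
    and zero: "\<forall>x. x \<subseteq> {..<n} \<longrightarrow> (\<Sum>S\<in>Pow {..<n}. a S * of_bool (S \<subseteq> x)) = (0::real)"
  shows "a S = 0"
proof (induction "card S" arbitrary: S rule: less_induct)
  case less
  show ?case
  proof (cases "S \<subseteq> {..<n}")
    case False
    then show ?thesis using supp by auto
  next
    case True
    have "a T * of_bool (T \<subseteq> S) = (if T = S then a S else 0)" for T
    proof (cases "T \<subset> S")
      case True
      then have "card T < card S"
        using \<open>S \<subseteq> {..<n}\<close> by (intro psubset_card_mono) (auto intro: finite_subset)
      then show ?thesis using less True by auto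
    qed auto
    then have "(\<Sum>T\<in>Pow {..<n}. a T * of_bool (T \<subseteq> S)) = a S"
      using True by (simp add: sum.delta)
    then show ?thesis using zero True by simp
  qed
qed

lemma mexpansion_unique: "mexpansion n f a \<Longrightarrow> mexpansion n f b \<Longrightarrow> a = b"
proof
  fix S
  assume "mexpansion n f a" "mexpansion n f b"
  then have "a S - b S = 0"
    by (intro expansion_zero_imp_coeffs_zero[of n "\<lambda>S. a S - b S"])
      (auto simp: mexpansion_def left_diff_distrib sum_subtractf)
  then show "a S = b S" by simp
qed

lemma mexpansion_exists: "\<exists>a. mexpansion n f a"
proof -
  have indicator: "mpoly_deg_le n n (\<lambda>x. of_bool (x \<inter> {..<n} = T) * of_bool (f T))"
    if "T \<in> Pow {..<n}" for T
    using mpoly_deg_le_mult[OF mpoly_deg_le_prefix_indicator[OF PowD[OF that] order.refl]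
        mpoly_deg_le_const[of n 0 "of_bool (f T)"]]
    by simp
  have "mpoly_deg_le n n (\<lambda>x. \<Sum>T\<in>Pow {..<n}. of_bool (x \<inter> {..<n} = T) * of_bool (f T))"
    by (rule mpoly_deg_le_sum[OF _ indicator]) simp
  from mpoly_deg_le_coeffs[OF this] obtain a where a: "\<forall>S. \<not> S \<subseteq> {..<n} \<longrightarrow> a S = 0"
    "\<forall>x. (\<Sum>T\<in>Pow {..<n}. of_bool (x \<inter> {..<n} = T) * of_bool (f T)) =
       (\<Sum>S\<in>Pow {..<n}. a S * of_bool (S \<subseteq> x) :: real)"
    by blast
  have "of_bool (f x) = (\<Sum>S\<in>Pow {..<n}. a S * of_bool (S \<subseteq> x))" if "x \<subseteq> {..<n}" for x
  proof -
    have "(\<Sum>T\<in>Pow {..<n}. of_bool (x \<inter> {..<n} = T) * of_bool (f T)) = (of_bool (f x) :: real)"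
      using that by (subst sum_of_bool_eq_delta) (auto simp: Int_absorb2)
    then show ?thesis using a(2) by metis
  qed
  then have "mexpansion n f a" unfolding mexpansion_def using a(1) by blast
  then show ?thesis by blast
qed

lemma mexpansion_mcoeff: "mexpansion n f (mcoeff n f)"
proof -
  have "\<exists>!a. mexpansion n f a" using mexpansion_exists mexpansion_unique by blast
  then show ?thesis unfolding mcoeff_eq_The_mexpansion by (rule theI')
qed

lemma mcoeff_eq: "mexpansion n f a \<Longrightarrow> mcoeff n f = a"
  using mexpansion_unique mexpansion_mcoeff by blast

lemma mcoeff_outside: "\<not> S \<subseteq> {..<n} \<Longrightarrow> mcoeff n f S = 0"
  using mexpansion_mcoeff[of n f] unfolding mexpansion_def by blast

lemma mcoeff_expansion:
  "x \<subseteq> {..<n} \<Longrightarrow> of_bool (f x) = (\<Sum>S\<in>Pow {..<n}. mcoeff n f S * of_bool (S \<subseteq> x))"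
  using mexpansion_mcoeff[of n f] unfolding mexpansion_def by blast

lemma mcoeff_eq_0_above_mpoly_deg:
  assumes "mpoly_deg_le n d h" "\<And>x. x \<subseteq> {..<n} \<Longrightarrow> h x = of_bool (f x)" "d < card S"
  shows "mcoeff n f S = 0"
proof -
  obtain a where a: "\<forall>S. \<not> S \<subseteq> {..<n} \<longrightarrow> a S = 0" "\<forall>S. d < card S \<longrightarrow> a S = 0"
     "\<forall>x. h x = (\<Sum>S\<in>Pow {..<n}. a S * of_bool (S \<subseteq> x))"
    using mpoly_deg_le_coeffs[OF assms(1)] by blast
  then have "mexpansion n f a" unfolding mexpansion_def using assms(2) by auto
  then have "mcoeff n f = a" by (rule mcoeff_eq)
  then show ?thesis using a(2) assms(3) by simp
qed

lemma bdeg_le_if_mpoly_deg_le: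
  assumes "mpoly_deg_le n d h" "\<And>x. x \<subseteq> {..<n} \<Longrightarrow> h x = of_bool (f x)"
  shows "bdeg n f \<le> d"
  unfolding bdeg_def
proof (subst Max_le_iff)
  show "finite (insert 0 {card S |S. S \<subseteq> {..<n} \<and> mcoeff n f S \<noteq> 0})"
    by (simp add: finite_cards_of_subsets)
  show "\<forall>a\<in>insert 0 {card S |S. S \<subseteq> {..<n} \<and> mcoeff n f S \<noteq> 0}. a \<le> d"
    using mcoeff_eq_0_above_mpoly_deg[OF assms] by (auto simp: not_less[symmetric])
qed simp

lemma card_le_bdeg: "S \<subseteq> {..<n} \<Longrightarrow> mcoeff n f S \<noteq> 0 \<Longrightarrow> card S \<le> bdeg n f"
  unfolding bdeg_def by (rule Max_ge) (use finite_cards_of_subsets in auto)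

lemma card_le_deg_i:
  "S \<subseteq> {..<n} \<Longrightarrow> i \<in> S \<Longrightarrow> mcoeff n f S \<noteq> 0 \<Longrightarrow> card S \<le> deg_i n f i"
  unfolding deg_i_def by (rule Max_ge) (use finite_cards_of_subsets in auto)

lemma deg_i_le_bdeg:
  assumes "relevant n f i"
  shows "deg_i n f i \<le> bdeg n f"
proof -
  let ?A = "{card S | S. S \<subseteq> {..<n} \<and> i \<in> S \<and> mcoeff n f S \<noteq> 0}"
  have "?A \<noteq> {}" using assms unfolding relevant_def by auto
  then have "Max ?A \<in> ?A"
    using finite_cards_of_subsets[of n "\<lambda>S. i \<in> S \<and> mcoeff n f S \<noteq> 0"] by (intro Max_in) auto
  then show ?thesis unfolding deg_i_def using card_le_bdeg by fastforce
qed

lemma relevantI: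
  assumes z: "z \<subseteq> {..<n}" and v: "v < n" and changes: "f z \<noteq> f (insert v z)"
  shows "relevant n f v"
proof (rule ccontr)
  assume "\<not> relevant n f v"
  then have "mcoeff n f S * of_bool (S \<subseteq> z) = mcoeff n f S * of_bool (S \<subseteq> insert v z)"
    if "S \<subseteq> {..<n}" for S
    using that by (cases "v \<in> S") (auto simp: relevant_def subset_insert)
  then have "(of_bool (f z) :: real) = (\<Sum>S\<in>Pow {..<n}. mcoeff n f S * of_bool (S \<subseteq> insert v z))"
    unfolding mcoeff_expansion[OF z, of f] by (intro sum.cong) auto
  also have "\<dots> = of_bool (f (insert v z))"
    using z v by (intro mcoeff_expansion[symmetric]) auto
  finally show False using changes by (cases "f z"; cases "f (insert v z)") auto
qed

text \<open>If flipping x_i never changes f, then dropping the monomials containing i from the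
  expansion still represents f, so by uniqueness these coefficients vanish.\<close>

lemma relevantD:
  assumes "relevant n f i"
  shows "\<exists>z\<subseteq>{..<n}. f (z - {i}) \<noteq> f (insert i z)"
proof (rule ccontr)
  assume "\<not> (\<exists>z\<subseteq>{..<n}. f (z - {i}) \<noteq> f (insert i z))"
  then have f_drop_i: "f x = f (x - {i})" if "x \<subseteq> {..<n}" for x
  proof (cases "i \<in> x")
    case True
    then show ?thesis using that \<open>\<not> (\<exists>z\<subseteq>{..<n}. f (z - {i}) \<noteq> f (insert i z))\<close>
      by (simp add: insert_absorb)
  qed simp
  define a where "a S = (if i \<in> S then 0 else mcoeff n f S)" for S
  have "mexpansion n f a"
    unfolding mexpansion_def
  proof (intro conjI allI impI)
    fix S
    assume "\<not> S \<subseteq> {..<n}"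
    then show "a S = 0" unfolding a_def using mcoeff_outside by auto
  next
    fix x
    assume x: "x \<subseteq> {..<n}"
    then have "(of_bool (f x)::real) = of_bool (f (x - {i}))" using f_drop_i by simp
    also have "\<dots> = (\<Sum>S\<in>Pow {..<n}. mcoeff n f S * of_bool (S \<subseteq> x - {i}))"
      using x by (intro mcoeff_expansion) auto
    also have "\<dots> = (\<Sum>S\<in>Pow {..<n}. a S * of_bool (S \<subseteq> x))"
      by (rule sum.cong) (auto simp: a_def subset_Diff_insert)
    finally show "of_bool (f x) = (\<Sum>S\<in>Pow {..<n}. a S * of_bool (S \<subseteq> x))" .
  qed
  then have "mcoeff n f = a" by (rule mcoeff_eq)
  then have "mcoeff n f S = 0" if "i \<in> S" for S
    using that by (subst \<open>mcoeff n f = a\<close>) (simp add: a_def)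
  then show False using assms unfolding relevant_def by blast
qed

subsection \<open>The lower bound C_d \<le> W_d\<close>

lemma weight_eq_sum_relevant:
  "weight n f = (\<Sum>i\<in>{i. i < n \<and> relevant n f i}. 2 powr (- real (deg_i n f i)))"
proof -
  have "{i. i < n \<and> relevant n f i} = {i\<in>{..<n}. relevant n f i}" by auto
  then show ?thesis unfolding weight_def wt_i_def by (simp add: sum.inter_filter[symmetric])
qed

lemma numrel_scaled_le_weight:
  assumes "bdeg n f \<le> d"
  shows "real (numrel n f) * 2 powr (- real d) \<le> weight n f"
proof -
  let ?R = "{i. i < n \<and> relevant n f i}"
  have "real (numrel n f) * 2 powr (- real d) = (\<Sum>i\<in>?R. 2 powr (- real d))"
    unfolding numrel_def by simp
  also have "\<dots> \<le> (\<Sum>i\<in>?R. 2 powr (- real (deg_i n f i)))"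
    using deg_i_le_bdeg assms by (intro sum_mono powr_mono) fastforce+
  finally show ?thesis by (simp add: weight_eq_sum_relevant)
qed

lemma bdeg_comp_le:
  assumes \<sigma>: "\<And>x. \<sigma> x \<subseteq> {..<n}"
    and monomials: "\<And>S. S \<subseteq> {..<n} \<Longrightarrow> mcoeff n f S \<noteq> 0 \<Longrightarrow>
        mpoly_deg_le N d (\<lambda>x. of_bool (S \<subseteq> \<sigma> x))"
  shows "bdeg N (\<lambda>x. f (\<sigma> x)) \<le> d"
proof (rule bdeg_le_if_mpoly_deg_le)
  show "mpoly_deg_le N d (\<lambda>x. \<Sum>S\<in>Pow {..<n}. mcoeff n f S * of_bool (S \<subseteq> \<sigma> x))"
  proof (rule mpoly_deg_le_sum)
    fix S
    assume "S \<in> Pow {..<n}"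
    then show "mpoly_deg_le N d (\<lambda>x. mcoeff n f S * of_bool (S \<subseteq> \<sigma> x))"
      using monomials[of S] mpoly_deg_le_cmult[of N d "\<lambda>x. of_bool (S \<subseteq> \<sigma> x)" "mcoeff n f S"]
      by (cases "mcoeff n f S = 0") (auto simp: mpoly_deg_le_const)
  qed simp
  show "(\<Sum>S\<in>Pow {..<n}. mcoeff n f S * of_bool (S \<subseteq> \<sigma> x)) = of_bool (f (\<sigma> x))" for x
    by (rule mcoeff_expansion[OF \<sigma>, symmetric])
qed

subsection \<open>Copies of variables selected by address bits\<close>

text \<open>Variables 0, ..., d - 1 are the address bits; the copy of variable i at address p
  (a set of address bits) is the variable copy_var d i p.\<close>

definition copy_var :: "nat \<Rightarrow> nat \<Rightarrow> nat set \<Rightarrow> nat" where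
  "copy_var d i p = d + prod_encode (i, set_encode p)"

definition addressed :: "nat \<Rightarrow> nat \<Rightarrow> (nat \<Rightarrow> nat) \<Rightarrow> nat set \<Rightarrow> nat set" where
  "addressed n d t x = {i. i < n \<and> copy_var d i (x \<inter> {..<t i}) \<in> x}"

lemma copy_var_ge: "d \<le> copy_var d i p"
  unfolding copy_var_def by simp

lemma copy_var_eq_imp_eq: "copy_var d i p = copy_var d j q \<Longrightarrow> i = j"
  unfolding copy_var_def by simp

lemma copy_var_eq_iff:
  "finite p \<Longrightarrow> finite q \<Longrightarrow> copy_var d i p = copy_var d j q \<longleftrightarrow> i = j \<and> p = q"
  unfolding copy_var_def by (auto simp: set_encode_eq)

lemma copy_vars_bounded:
  obtains N where "d \<le> N" "\<And>i p. i < n \<Longrightarrow> p \<subseteq> {..<d} \<Longrightarrow> copy_var d i p < N"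
proof -
  have "finite (insert d ((\<lambda>(i, p). copy_var d i p) ` ({..<n} \<times> Pow {..<d})))" by simp
  then obtain N where "\<forall>k\<in>insert d ((\<lambda>(i, p). copy_var d i p) ` ({..<n} \<times> Pow {..<d})). k < N"
    unfolding finite_nat_set_iff_bounded by blast
  then show ?thesis using that[of N] by force
qed

text \<open>The address bits read by the monomial over S are among the first d - |S|; summing over
  their possible values b gives of_bool (S \<subseteq> addressed n d t x) as a sum of terms
  [x \<inter> {..<d - |S|} = b] \<cdot> \<Prod>(copies of S at b), each of degree (d - |S|) + |S|.\<close>

lemma mpoly_deg_le_addressed_monomial:
  assumes S: "S \<subseteq> {..<n}" and t: "\<And>i. i \<in> S \<Longrightarrow> card S + t i \<le> d"
    and N: "d \<le> N" "\<And>i p. i < n \<Longrightarrow> p \<subseteq> {..<d} \<Longrightarrow> copy_var d i p < N"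
  shows "mpoly_deg_le N d (\<lambda>x. of_bool (S \<subseteq> addressed n d t x))"
proof -
  define T where "T = d - card S"
  define copies where "copies b = (\<lambda>i. copy_var d i (b \<inter> {..<t i})) ` S" for b
  have "card S \<le> d" using t by (cases "S = {}") auto
  have T: "t i \<le> T" if "i \<in> S" for i using t[OF that] unfolding T_def by simp
  have "of_bool (S \<subseteq> addressed n d t x) =
      (\<Sum>b\<in>Pow {..<T}. of_bool (x \<inter> {..<T} = b) * (of_bool (copies b \<subseteq> x) :: real))" for x
  proof -
    have "x \<inter> {..<T} \<inter> {..<t i} = x \<inter> {..<t i}" if "i \<in> S" for i using T[OF that] by auto
    then have "S \<subseteq> addressed n d t x \<longleftrightarrow> copies (x \<inter> {..<T}) \<subseteq> x"
      unfolding copies_def addressed_def using S by auto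
    then show ?thesis by (subst sum_of_bool_eq_delta) auto
  qed
  moreover have "mpoly_deg_le N (T + card S)
      (\<lambda>x. \<Sum>b\<in>Pow {..<T}. of_bool (x \<inter> {..<T} = b) * of_bool (copies b \<subseteq> x))"
  proof (intro mpoly_deg_le_sum mpoly_deg_le_mult)
    fix b
    assume b: "b \<in> Pow {..<T}"
    show "mpoly_deg_le N T (\<lambda>x. of_bool (x \<inter> {..<T} = b))"
      using b N(1) unfolding T_def by (intro mpoly_deg_le_prefix_indicator) auto
    have "copies b \<subseteq> {..<N}"
      unfolding copies_def using S b T_def by (auto intro!: N(2))
    moreover have "card (copies b) \<le> card S"
      unfolding copies_def using S by (intro card_image_le) (auto intro: finite_subset)
    ultimately show "mpoly_deg_le N (card S) (\<lambda>x. of_bool (copies b \<subseteq> x))"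
      using mpoly_deg_le.monomial[of "copies b" N "card S" 1] by simp
  qed simp
  ultimately show ?thesis using \<open>card S \<le> d\<close> unfolding T_def by simp
qed

text \<open>Set the address bits to p and, for each j \<in> z - {i}, the copy of j addressed by p;
  adding the copy of i at p then changes the substituted input from z - {i} to insert i z.\<close>

lemma relevant_copy_var:
  assumes rel: "relevant n f i" and p: "p \<subseteq> {..<t i}" and t: "\<And>j. t j \<le> d"
    and N: "d \<le> N" "\<And>i p. i < n \<Longrightarrow> p \<subseteq> {..<d} \<Longrightarrow> copy_var d i p < N"
  shows "relevant N (\<lambda>x. f (addressed n d t x)) (copy_var d i p)"
proof -
  have "i < n" using rel unfolding relevant_def by auto
  obtain z where z: "z \<subseteq> {..<n}" "f (z - {i}) \<noteq> f (insert i z)" using relevantD[OF rel] by blast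
  define x0 where "x0 = p \<union> (\<lambda>j. copy_var d j (p \<inter> {..<t j})) ` (z - {i})"
  have p_d: "p \<subseteq> {..<d}" using p t[of i] by auto
  have not_in_p: "copy_var d j q \<notin> p" for j q using p_d copy_var_ge[of d j q] by auto
  have cut: "x \<inter> {..<t j} = p \<inter> {..<t j}" if "x = x0 \<or> x = insert (copy_var d i p) x0" for x j
  proof -
    have "y \<notin> {..<t j}" if y: "y \<in> (\<lambda>k. copy_var d k (p \<inter> {..<t k})) ` (z - {i})" for y
    proof -
      obtain k q where "y = copy_var d k q" using y by blast
      then show ?thesis using copy_var_ge[of d k q] t[of j] by simp
    qed
    then show ?thesis using that copy_var_ge[of d i p] t[of j] unfolding x0_def by auto
  qed
  have "addressed n d t x0 = z - {i}"
    unfolding addressed_def cut[OF disjI1[OF refl]]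
    using not_in_p z(1) unfolding x0_def by (auto dest: copy_var_eq_imp_eq)
  moreover have "addressed n d t (insert (copy_var d i p) x0) = insert i z"
    unfolding addressed_def cut[OF disjI2[OF refl]]
    using not_in_p z(1) \<open>i < n\<close> Int_absorb2[OF p] unfolding x0_def
    by (auto dest: copy_var_eq_imp_eq)
  moreover have "x0 \<subseteq> {..<N}"
  proof -
    have "p \<subseteq> {..<N}" using p_d N(1) by auto
    moreover have "(\<lambda>j. copy_var d j (p \<inter> {..<t j})) ` (z - {i}) \<subseteq> {..<N}"
      using z(1) p_d by (auto intro!: N(2))
    ultimately show ?thesis unfolding x0_def by blast
  qed
  ultimately show ?thesis
    using z(2) by (intro relevantI N(2) \<open>i < n\<close> p_d) auto
qed

subsection \<open>The upper bound W_d \<le> C_d\<close>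

lemma weight_eq_scaled_sum_pow:
  assumes "bdeg n f \<le> d"
  shows "weight n f =
    (\<Sum>i\<in>{i. i < n \<and> relevant n f i}. 2 ^ (d - deg_i n f i)) * 2 powr (- real d)"
proof -
  have "2 powr (- real (deg_i n f i)) = 2 ^ (d - deg_i n f i) * 2 powr (- real d)"
    if "relevant n f i" for i
  proof -
    have "deg_i n f i \<le> d" using deg_i_le_bdeg[OF that] assms by simp
    then have "(2::real) ^ (d - deg_i n f i) = 2 powr (real d - real (deg_i n f i))"
      by (simp add: powr_realpow[symmetric] of_nat_diff)
    then show ?thesis by (simp add: powr_add[symmetric])
  qed
  then show ?thesis by (simp add: weight_eq_sum_relevant sum_distrib_right)
qed

lemma exists_numrel_scaled_ge_weight:
  assumes deg: "bdeg n f \<le> d"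
  shows "\<exists>N g. bdeg N g \<le> d \<and> weight n f \<le> real (numrel N g) * 2 powr (- real d)"
proof -
  define t where "t i = d - deg_i n f i" for i
  define g where "g x = f (addressed n d t x)" for x
  define R where "R = {i. i < n \<and> relevant n f i}"
  define copies where "copies = Sigma R (\<lambda>i. Pow {..<t i})"
  obtain N where N: "d \<le> N" "\<And>i p. i < n \<Longrightarrow> p \<subseteq> {..<d} \<Longrightarrow> copy_var d i p < N"
    using copy_vars_bounded by blast
  have t_le: "t i \<le> d" for i unfolding t_def by simp
  have "bdeg N g \<le> d"
    unfolding g_def
  proof (rule bdeg_comp_le)
    show "addressed n d t x \<subseteq> {..<n}" for x unfolding addressed_def by auto
    fix S
    assume S: "S \<subseteq> {..<n}" "mcoeff n f S \<noteq> 0"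
    have "card S + t i \<le> d" if "i \<in> S" for i
    proof -
      have "deg_i n f i \<le> d"
        using deg_i_le_bdeg[of n f i] deg S that unfolding relevant_def by force
      then show ?thesis using card_le_deg_i[OF S(1) that S(2)] unfolding t_def by linarith
    qed
    then show "mpoly_deg_le N d (\<lambda>x. of_bool (S \<subseteq> addressed n d t x))"
      using mpoly_deg_le_addressed_monomial[OF S(1) _ N] by blast
  qed
  have copy_relevant: "copy_var d i p \<in> {j. j < N \<and> relevant N g j}" if "(i, p) \<in> copies" for i p
  proof -
    have "i < n" "relevant n f i" "p \<subseteq> {..<t i}" using that unfolding copies_def R_def by auto
    moreover have "p \<subseteq> {..<d}" using \<open>p \<subseteq> {..<t i}\<close> t_le[of i] by auto
    ultimately show ?thesis
      unfolding g_def using N(2) relevant_copy_var[where t = t, OF \<open>relevant n f i\<close> \<open>p \<subseteq> {..<t i}\<close> t_le N]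
      by simp
  qed
  have "inj_on (\<lambda>(i, p). copy_var d i p) copies"
    unfolding copies_def by (rule inj_onI) (auto simp: copy_var_eq_iff finite_subset)
  then have "card copies = card ((\<lambda>(i, p). copy_var d i p) ` copies)"
    by (rule card_image[symmetric])
  also have "\<dots> \<le> numrel N g"
    unfolding numrel_def using copy_relevant by (intro card_mono) auto
  finally have "real (card copies) \<le> real (numrel N g)" by simp
  moreover have "real (card copies) = (\<Sum>i\<in>R. (2::real) ^ t i)"
    unfolding copies_def R_def by (simp add: card_SigmaI card_Pow)
  ultimately have "(\<Sum>i\<in>R. (2::real) ^ t i) \<le> real (numrel N g)" by simp
  then have "weight n f \<le> real (numrel N g) * 2 powr (- real d)"
    unfolding weight_eq_scaled_sum_pow[OF deg] R_def t_def by (rule mult_right_mono) simp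
  with \<open>bdeg N g \<le> d\<close> show ?thesis by blast
qed

theorem proposition1:
  fixes d :: nat
  assumes "d \<ge> 1"
  shows "C_d d = W_d d"
proof -
  let ?A = "{(n, f). bdeg n f \<le> d}"
  have "bdeg 0 (\<lambda>_. False) \<le> d"
    by (rule bdeg_le_if_mpoly_deg_le[OF mpoly_deg_le_const[of _ _ 0]]) simp
  then have "?A \<noteq> {}" by blast
  have "C_d d = (SUP p\<in>?A. ereal (real (numrel (fst p) (snd p))) * ereal (2 powr (- real d)))"
    unfolding C_d_def R_d_def by (rule Sup_ereal_mult_right'[OF \<open>?A \<noteq> {}\<close>]) simp
  also have "\<dots> = W_d d"
    unfolding W_d_def
  proof (rule SUP_eq)
    fix p
    assume "p \<in> ?A"
    then show "\<exists>q\<in>?A. ereal (real (numrel (fst p) (snd p))) * ereal (2 powr (- real d)) \<le>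
        ereal (weight (fst q) (snd q))"
      using numrel_scaled_le_weight by (intro bexI[of _ p]) auto
  next
    fix p
    assume "p \<in> ?A"
    then obtain N g where "bdeg N g \<le> d" "weight (fst p) (snd p) \<le> real (numrel N g) * 2 powr (- real d)"
      using exists_numrel_scaled_ge_weight by (cases p) force
    then show "\<exists>q\<in>?A. ereal (weight (fst p) (snd p)) \<le>
        ereal (real (numrel (fst q) (snd q))) * ereal (2 powr (- real d))"
      by (intro bexI[of _ "(N, g)"]) auto
  qed
  finally show ?thesis .
qed

end
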